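(* Let $f\colon[n]^2\to\{0,1\}$ be $2$-column-wise-monotone with $f(1,j)=f(n,j)=0$ for all $j\in[n]$. Then $\mathrm{dist}(f,\mathcal{M}^{(2)}_2)\leq L_1(\overline{f},\mathcal{M}_1)+L_1(\underline{f},\mathcal{M}_1)$. In particular, if $f$ is $\varepsilon$-far from $2$-monotone, then at least one of the two sequences $\underline{f},\overline{f}$ satisfies $L_1(\cdot,\mathcal{M}_1)\geq\varepsilon/2$.
   Context: $[n]^2$ is ordered coordinatewise. $f\colon[n]^2\to\{0,1\}$ is $2$-monotone if there are no $x\preceq y\preceq z$ with $(f(x),f(y),f(z))=(1,0,1)$; $\mathcal{M}^{(2)}_2$ denotes the set of $2$-monotone functions on $[n]^2$ and $\mathrm{dist}(f,\mathcal{M}^{(2)}_2)$ the minimum normalized Hamming distance from $f$ to it. $f$ is $2$-column-wise-monotone if each column map $i\mapsto f(i,j)$ has no $a\leq b\leq c$ with values $1,0,1$. For a column $j$ on which $f$ is not constant, $\underline{f}_j=\min\{i: f(i,j)\neq f(1,j)\}-1$ and $\overline{f}_j=\max\{i: f(i,j)\neq f(n,j)\}+1$; otherwise $\underline{f}_j=\overline{f}_j=1$. These sequences are viewed as functions $[n]\to[n]$. For $a,b\colon[n]\to[n]$, $L_1(a,b)=\frac{1}{n^2}\sum_{j=1}^n|a(j)-b(j)|$, and $L_1(a,\mathcal{M}_1)$ is the minimum of $L_1(a,b)$ over non-increasing $b\colon[n]\to[n]$. *)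

theory Defs
  imports Complex_Main
begin

text \<open>Functions f : [n]^2 -> {0,1} are modelled as f :: nat => nat => bool,
  f i j = True meaning f(i,j) = 1; only values on {1..n} x {1..n} matter.\<close>

definition leq2 :: "nat \<times> nat \<Rightarrow> nat \<times> nat \<Rightarrow> bool" where
  "leq2 x y \<longleftrightarrow> fst x \<le> fst y \<and> snd x \<le> snd y"

definition grid :: "nat \<Rightarrow> (nat \<times> nat) set" where
  "grid n = {1..n} \<times> {1..n}"

definition two_monotone :: "nat \<Rightarrow> (nat \<Rightarrow> nat \<Rightarrow> bool) \<Rightarrow> bool" where
  "two_monotone n f \<longleftrightarrow>
     (\<forall>x\<in>grid n. \<forall>y\<in>grid n. \<forall>z\<in>grid n.
        leq2 x y \<and> leq2 y z \<longrightarrow>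
        \<not> (f (fst x) (snd x) \<and> \<not> f (fst y) (snd y) \<and> f (fst z) (snd z)))"

definition two_colwise_monotone :: "nat \<Rightarrow> (nat \<Rightarrow> nat \<Rightarrow> bool) \<Rightarrow> bool" where
  "two_colwise_monotone n f \<longleftrightarrow>
     (\<forall>j\<in>{1..n}. \<forall>a\<in>{1..n}. \<forall>b\<in>{1..n}. \<forall>c\<in>{1..n}.
        a \<le> b \<and> b \<le> c \<longrightarrow> \<not> (f a j \<and> \<not> f b j \<and> f c j))"

definition dist_mono2 :: "nat \<Rightarrow> (nat \<Rightarrow> nat \<Rightarrow> bool) \<Rightarrow> real" where
  "dist_mono2 n f = Min {real (card {x\<in>grid n. f (fst x) (snd x) \<noteq> g (fst x) (snd x)}) / real n ^ 2
                         | g. two_monotone n g}"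

definition col_const :: "nat \<Rightarrow> (nat \<Rightarrow> nat \<Rightarrow> bool) \<Rightarrow> nat \<Rightarrow> bool" where
  "col_const n f j \<longleftrightarrow> (\<forall>i\<in>{1..n}. f i j = f 1 j)"

definition lower_seq :: "nat \<Rightarrow> (nat \<Rightarrow> nat \<Rightarrow> bool) \<Rightarrow> nat \<Rightarrow> nat" where
  "lower_seq n f j = (if col_const n f j then 1
                      else Min {i\<in>{1..n}. f i j \<noteq> f 1 j} - 1)"

definition upper_seq :: "nat \<Rightarrow> (nat \<Rightarrow> nat \<Rightarrow> bool) \<Rightarrow> nat \<Rightarrow> nat" where
  "upper_seq n f j = (if col_const n f j then 1
                      else Max {i\<in>{1..n}. f i j \<noteq> f n j} + 1)"

definition L1 :: "nat \<Rightarrow> (nat \<Rightarrow> nat) \<Rightarrow> (nat \<Rightarrow> nat) \<Rightarrow> real" where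
  "L1 n a b = (\<Sum>j=1..n. \<bar>real (a j) - real (b j)\<bar>) / real n ^ 2"

definition nonincr_seq :: "nat \<Rightarrow> (nat \<Rightarrow> nat) \<Rightarrow> bool" where
  "nonincr_seq n b \<longleftrightarrow> (\<forall>j\<in>{1..n}. b j \<in> {1..n}) \<and>
     (\<forall>j1\<in>{1..n}. \<forall>j2\<in>{1..n}. j1 \<le> j2 \<longrightarrow> b j2 \<le> b j1)"

definition L1_M1 :: "nat \<Rightarrow> (nat \<Rightarrow> nat) \<Rightarrow> real" where
  "L1_M1 n a = Min {L1 n a b | b. nonincr_seq n b}"

end

theory Submission
  imports Defs
begin

text \<open>Under the hypotheses every column of \<open>f\<close> is the indicator of the open interval
  between its lower and upper boundary, so \<open>f\<close> is the band between the sequences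
  \<open>lower_seq n f\<close> and \<open>upper_seq n f\<close>. Replacing both boundary sequences by their closest
  non-increasing sequences yields a band that is 2-monotone, and in each column the two
  bands differ in at most as many cells as the two pairs of boundaries are apart.\<close>

definition band :: "(nat \<Rightarrow> nat) \<Rightarrow> (nat \<Rightarrow> nat) \<Rightarrow> nat \<Rightarrow> nat \<Rightarrow> bool" where
  "band l u = (\<lambda>i j. l j < i \<and> i < u j)"

lemma real_max_minus_min: "real (max x y - min x y) = \<bar>real x - real y\<bar>"
  by (simp add: of_nat_diff max_def min_def)

lemma L1_eq_sum_nat:
  "L1 n a b = real (\<Sum>j=1..n. max (a j) (b j) - min (a j) (b j)) / real n ^ 2"
  by (simp add: L1_def real_max_minus_min)

lemma finite_L1_nonincr: "finite {L1 n a b | b. nonincr_seq n b}"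
proof -
  let ?K = "\<Sum>j=1..n. a j + n"
  have "{L1 n a b | b. nonincr_seq n b} \<subseteq> (\<lambda>k. real k / real n ^ 2) ` {..?K}"
  proof
    fix x assume "x \<in> {L1 n a b | b. nonincr_seq n b}"
    then obtain b where b: "nonincr_seq n b" and x: "x = L1 n a b" by auto
    have "(\<Sum>j=1..n. max (a j) (b j) - min (a j) (b j)) \<le> ?K"
    proof (rule sum_mono)
      fix j assume "j \<in> {1..n}"
      then have "b j \<le> n" using b by (simp add: nonincr_seq_def)
      then show "max (a j) (b j) - min (a j) (b j) \<le> a j + n" by linarith
    qed
    then show "x \<in> (\<lambda>k. real k / real n ^ 2) ` {..?K}"
      unfolding x L1_eq_sum_nat by (intro image_eqI[OF refl]) simp
  qed
  then show ?thesis by (rule finite_subset) auto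
qed

lemma L1_M1_attained: obtains b where "nonincr_seq n b" "L1_M1 n a = L1 n a b"
proof -
  have "nonincr_seq n (\<lambda>_. 1)" by (auto simp: nonincr_seq_def)
  then have "L1_M1 n a \<in> {L1 n a b | b. nonincr_seq n b}"
    unfolding L1_M1_def using finite_L1_nonincr by (intro Min_in) auto
  then show ?thesis using that by auto
qed

lemma dist_mono2_le:
  assumes "two_monotone n g"
  shows "dist_mono2 n f \<le> real (card {x\<in>grid n. f (fst x) (snd x) \<noteq> g (fst x) (snd x)}) / real n ^ 2"
proof -
  let ?D = "{real (card {x\<in>grid n. f (fst x) (snd x) \<noteq> g (fst x) (snd x)}) / real n ^ 2
             | g. two_monotone n g}"
  have "?D \<subseteq> (\<lambda>k. real k / real n ^ 2) ` {..card (grid n)}"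
  proof
    fix y assume "y \<in> ?D"
    then obtain h where y: "y = real (card {x\<in>grid n. f (fst x) (snd x) \<noteq> h (fst x) (snd x)}) / real n ^ 2"
      by auto
    have "card {x\<in>grid n. f (fst x) (snd x) \<noteq> h (fst x) (snd x)} \<le> card (grid n)"
      by (intro card_mono) (auto simp: grid_def)
    then show "y \<in> (\<lambda>k. real k / real n ^ 2) ` {..card (grid n)}" using y by auto
  qed
  then have "finite ?D" by (rule finite_subset) auto
  then show ?thesis unfolding dist_mono2_def using assms by (intro Min_le) auto
qed

lemma two_monotone_band:
  assumes "antimono_on {1..n} l" "antimono_on {1..n} u"
  shows "two_monotone n (band l u)"
  unfolding two_monotone_def
proof (intro ballI impI)
  fix x y z assume grid: "x \<in> grid n" "y \<in> grid n" "z \<in> grid n" and le: "leq2 x y \<and> leq2 y z"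
  then have "l (snd y) \<le> l (snd x)" "u (snd z) \<le> u (snd y)"
    using assms by (auto simp: grid_def leq2_def monotone_on_def)
  then show "\<not> (band l u (fst x) (snd x) \<and> \<not> band l u (fst y) (snd y) \<and> band l u (fst z) (snd z))"
    using le by (auto simp: band_def leq2_def)
qed

lemma antimono_on_if_nonincr_seq: "nonincr_seq n b \<Longrightarrow> antimono_on {1..n} b"
  by (auto simp: nonincr_seq_def monotone_on_def)

lemma column_eq_band:
  assumes cm: "two_colwise_monotone n f"
    and ends: "\<not> f 1 j" "\<not> f n j" and j: "j \<in> {1..n}" and i: "i \<in> {1..n}"
  shows "f i j \<longleftrightarrow> band (lower_seq n f) (upper_seq n f) i j"
proof (cases "col_const n f j")
  case True
  then show ?thesis using ends i by (auto simp: col_const_def lower_seq_def upper_seq_def band_def)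
next
  case False
  define S where "S = {i\<in>{1..n}. f i j}"
  have "finite S" "S \<noteq> {}" using False ends by (auto simp: S_def col_const_def)
  then have S: "Min S \<in> S" "Max S \<in> S" by auto
  have "{i\<in>{1..n}. f i j \<noteq> f 1 j} = S" "{i\<in>{1..n}. f i j \<noteq> f n j} = S"
    using ends by (auto simp: S_def)
  then have bounds: "lower_seq n f j = Min S - 1" "upper_seq n f j = Max S + 1"
    using False by (simp_all add: lower_seq_def upper_seq_def)
  have "Min S \<ge> 1" using S by (auto simp: S_def)
  then have band_iff: "band (lower_seq n f) (upper_seq n f) i j \<longleftrightarrow> Min S \<le> i \<and> i \<le> Max S"
    by (auto simp: band_def bounds)
  show ?thesis
  proof
    assume "f i j"
    then show "band (lower_seq n f) (upper_seq n f) i j"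
      using i \<open>finite S\<close> by (auto simp: band_iff S_def)
  next
    assume "band (lower_seq n f) (upper_seq n f) i j"
    moreover have "f (Min S) j" "f (Max S) j" "Min S \<in> {1..n}" "Max S \<in> {1..n}"
      using S by (auto simp: S_def)
    ultimately show "f i j"
      using cm j i unfolding band_iff two_colwise_monotone_def by blast
  qed
qed

lemma card_grid_Collect:
  "card {x\<in>grid n. P (fst x) (snd x)} = (\<Sum>j=1..n. card {i\<in>{1..n}. P i j})"
proof -
  have "{x\<in>grid n. P (fst x) (snd x)} = (\<lambda>(j, i). (i, j)) ` (SIGMA j:{1..n}. {i\<in>{1..n}. P i j})"
    by (auto simp: grid_def image_iff)
  moreover have "inj_on (\<lambda>(j::nat, i::nat). (i, j)) A" for A by (auto simp: inj_on_def)
  ultimately show ?thesis by (simp add: card_image)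
qed

lemma card_interval_mismatch_le:
  "card {i\<in>{1..n}. (a < i \<and> i < b) \<noteq> (a' < i \<and> i < b')}
     \<le> (max a a' - min a a') + (max b b' - min b b')"
proof -
  have "card {i\<in>{1..n}. (a < i \<and> i < b) \<noteq> (a' < i \<and> i < b')}
        \<le> card ({min a a'<..max a a'} \<union> {min b b'..<max b b'})"
    by (intro card_mono) auto
  also have "\<dots> \<le> card {min a a'<..max a a'} + card {min b b'..<max b b'}"
    by (rule card_Un_le)
  finally show ?thesis by simp
qed

lemma card_band_mismatch_le:
  "card {x\<in>grid n. band a b (fst x) (snd x) \<noteq> band a' b' (fst x) (snd x)}
     \<le> (\<Sum>j=1..n. max (a j) (a' j) - min (a j) (a' j)) + (\<Sum>j=1..n. max (b j) (b' j) - min (b j) (b' j))"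
proof -
  have "card {x\<in>grid n. band a b (fst x) (snd x) \<noteq> band a' b' (fst x) (snd x)}
        = (\<Sum>j=1..n. card {i\<in>{1..n}. band a b i j \<noteq> band a' b' i j})"
    by (rule card_grid_Collect)
  also have "\<dots> \<le> (\<Sum>j=1..n. (max (a j) (a' j) - min (a j) (a' j)) + (max (b j) (b' j) - min (b j) (b' j)))"
    unfolding band_def by (intro sum_mono card_interval_mismatch_le)
  finally show ?thesis by (simp only: sum.distrib)
qed

lemma dist_mono2_le_L1_boundaries:
  assumes cm: "two_colwise_monotone n f"
    and ends: "\<forall>j\<in>{1..n}. \<not> f 1 j \<and> \<not> f n j"
    and l: "nonincr_seq n l" and u: "nonincr_seq n u"
  shows "dist_mono2 n f \<le> L1 n (upper_seq n f) u + L1 n (lower_seq n f) l"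
proof -
  let ?band_f = "band (lower_seq n f) (upper_seq n f)"
  have "{x\<in>grid n. f (fst x) (snd x) \<noteq> band l u (fst x) (snd x)}
        = {x\<in>grid n. ?band_f (fst x) (snd x) \<noteq> band l u (fst x) (snd x)}"
    using column_eq_band[OF cm] ends by (auto simp: grid_def)
  then have "card {x\<in>grid n. f (fst x) (snd x) \<noteq> band l u (fst x) (snd x)}
             \<le> (\<Sum>j=1..n. max (upper_seq n f j) (u j) - min (upper_seq n f j) (u j))
               + (\<Sum>j=1..n. max (lower_seq n f j) (l j) - min (lower_seq n f j) (l j))"
    using card_band_mismatch_le[of n "lower_seq n f" "upper_seq n f" l u] by (simp only: add.commute)
  then have "real (card {x\<in>grid n. f (fst x) (snd x) \<noteq> band l u (fst x) (snd x)})
             \<le> real (\<Sum>j=1..n. max (upper_seq n f j) (u j) - min (upper_seq n f j) (u j))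
               + real (\<Sum>j=1..n. max (lower_seq n f j) (l j) - min (lower_seq n f j) (l j))"
    unfolding of_nat_add[symmetric] of_nat_le_iff .
  then have "real (card {x\<in>grid n. f (fst x) (snd x) \<noteq> band l u (fst x) (snd x)}) / real n ^ 2
             \<le> L1 n (upper_seq n f) u + L1 n (lower_seq n f) l"
    unfolding L1_eq_sum_nat add_divide_distrib[symmetric] by (intro divide_right_mono) simp_all
  moreover have "two_monotone n (band l u)"
    using l u by (intro two_monotone_band antimono_on_if_nonincr_seq)
  ultimately show ?thesis using dist_mono2_le by (meson order_trans)
qed

theorem lemma5p3:
  fixes n :: nat and f :: "nat \<Rightarrow> nat \<Rightarrow> bool"
  assumes "two_colwise_monotone n f"
    and "\<forall>j\<in>{1..n}. \<not> f 1 j \<and> \<not> f n j"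
  shows "dist_mono2 n f \<le> L1_M1 n (upper_seq n f) + L1_M1 n (lower_seq n f)
         \<and> (\<forall>\<epsilon>::real. dist_mono2 n f \<ge> \<epsilon> \<longrightarrow>
              L1_M1 n (lower_seq n f) \<ge> \<epsilon> / 2 \<or> L1_M1 n (upper_seq n f) \<ge> \<epsilon> / 2)"
proof -
  obtain u where u: "nonincr_seq n u" "L1_M1 n (upper_seq n f) = L1 n (upper_seq n f) u"
    by (rule L1_M1_attained)
  obtain l where l: "nonincr_seq n l" "L1_M1 n (lower_seq n f) = L1 n (lower_seq n f) l"
    by (rule L1_M1_attained)
  have "dist_mono2 n f \<le> L1_M1 n (upper_seq n f) + L1_M1 n (lower_seq n f)"
    using dist_mono2_le_L1_boundaries[OF assms l(1) u(1)] u(2) l(2) by simp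
  then show ?thesis by linarith
qed

end
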